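(* Let $\alpha\in(0,1)$, $a,b\in\mathbb{R}$, $\tau>0$, and $Q(s)=s^\alpha-a-b e^{-s\tau}$ with the principal branch of $s^\alpha$ (and $0^\alpha=0$). If $a\le b<-a$, then $Q(s)=0$ has no root $s$ with $\operatorname{Re}s\ge 0$.
   Context: $s^\alpha=|s|^\alpha e^{i\alpha\arg s}$ with $\arg s\in(-\pi,\pi]$ restricted to $\operatorname{Re}s\ge0$, i.e. $\arg s\in[-\pi/2,\pi/2]$. *)

theory Defs
  imports "HOL-Analysis.Analysis"
begin

end

theory Submission
  imports Defs
begin

text \<open>On the closed right half-plane the principal power \<open>s\<^sup>\<alpha>\<close> with \<open>|\<alpha>| < 1\<close> has argument
  of modulus below \<open>\<pi>/2\<close>, so a root would need \<open>0 < Re (a + b e\<^sup>-\<^sup>s\<^sup>\<tau>) \<le> a + |b|\<close>, which the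
  hypothesis \<open>|b| \<le> -a\<close> forbids; at \<open>s = 0\<close> a root would mean \<open>a + b = 0\<close>.\<close>

lemma Re_powr_real_pos:
  fixes s :: complex and \<alpha> :: real
  assumes "s \<noteq> 0" and "0 \<le> Re s" and "\<bar>\<alpha>\<bar> < 1"
  shows "0 < Re (s powr complex_of_real \<alpha>)"
proof -
  have "\<bar>Im (Ln s)\<bar> \<le> pi / 2"
    using Re_Ln_pos_le[OF assms(1)] assms(2) by simp
  hence "\<bar>\<alpha> * Im (Ln s)\<bar> \<le> \<bar>\<alpha>\<bar> * (pi / 2)"
    unfolding abs_mult by (rule mult_left_mono) auto
  also have "\<dots> < pi / 2"
    using assms(3) pi_gt_zero by simp
  finally have "0 < cos (\<alpha> * Im (Ln s))"
    by (intro cos_gt_zero_pi) auto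
  thus ?thesis
    using assms(1) by (simp add: powr_def Re_exp)
qed

lemma norm_exp_right_half_plane_le_1:
  fixes s :: complex and \<tau> :: real
  assumes "0 \<le> Re s" and "0 \<le> \<tau>"
  shows "norm (exp (- s * complex_of_real \<tau>)) \<le> 1"
  using assms by simp

theorem lemma3p2:
  fixes \<alpha> a b \<tau> :: real
  assumes "0 < \<alpha>" and "\<alpha> < 1" and "0 < \<tau>"
    and "a \<le> b" and "b < - a"
  shows "\<not> (\<exists>s::complex. 0 \<le> Re s \<and>
            s powr complex_of_real \<alpha> - complex_of_real a
              - complex_of_real b * exp (- s * complex_of_real \<tau>) = 0)"
proof
  assume "\<exists>s::complex. 0 \<le> Re s \<and>
            s powr complex_of_real \<alpha> - complex_of_real a
              - complex_of_real b * exp (- s * complex_of_real \<tau>) = 0"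
  then obtain s :: complex where hs: "0 \<le> Re s"
    and "s powr complex_of_real \<alpha> - complex_of_real a
           - complex_of_real b * exp (- s * complex_of_real \<tau>) = 0"
    by blast
  then have root: "s powr complex_of_real \<alpha>
      = complex_of_real a + complex_of_real b * exp (- s * complex_of_real \<tau>)"
    by (simp only: diff_diff_eq right_minus_eq)
  show False
  proof (cases "s = 0")
    case True
    with root have "complex_of_real (a + b) = 0"
      by simp
    hence "a + b = 0"
      by (simp only: of_real_eq_0_iff)
    with assms(4,5) show False by simp
  next
    case False
    define z where "z = complex_of_real b * exp (- s * complex_of_real \<tau>)"
    have "0 < Re (s powr complex_of_real \<alpha>)"
      using Re_powr_real_pos[OF False hs] assms(1,2) by simp
    also have "\<dots> = a + Re z"
      unfolding root z_def by simp
    also have "\<dots> \<le> a + \<bar>b\<bar>"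
    proof -
      have "Re z \<le> norm z" by (rule complex_Re_le_cmod)
      also have "\<dots> = \<bar>b\<bar> * norm (exp (- s * complex_of_real \<tau>))"
        unfolding z_def norm_mult by simp
      also have "\<dots> \<le> \<bar>b\<bar>"
        using norm_exp_right_half_plane_le_1[OF hs, of \<tau>] assms(3) by (simp add: mult_left_le)
      finally show ?thesis by simp
    qed
    also have "\<dots> \<le> 0"
      using assms(4,5) by simp
    finally show False by simp
  qed
qed

end
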